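(* Consider the problem $\min f(x)$ subject to $x\in\mathcal{F}\cap\mathcal{Z}\cap X$, where $\mathcal{F}=\{x:g(x)\le0\}$, and the penalized problem $\min\{P(x;\varepsilon): x\in X\cap\mathcal{Z}\}$ with $P(x;\varepsilon)=f(x)+\frac1\varepsilon\sum_{i=1}^m\max\{0,g_i(x)\}$. Suppose EMFCQ (see context) holds. Then for any $\varepsilon>0$, every Clarke stationary point $\bar x$ of the penalized problem with $\bar x\in\mathcal{F}\cap\mathcal{Z}\cap X$ is a KKT stationary point of the constrained problem.
   Context: $\{1,\dots,n\}=I^c\cup I^z$, $I^c\cap I^z=\emptyset$; $v_c=(v_i)_{i\in I^c}$, $v_z=(v_i)_{i\in I^z}$. $l,u\in\mathbb{R}^n$ finite, $l_i<u_i$, $l_i,u_i\in\mathbb{Z}$ for $i\in I^z$; $X=\{x:l\le x\le u\}$, $\mathcal{Z}=\{x: x_i\in\mathbb{Z}\ \forall i\in I^z\}$. $f$ and $g=(g_1,\dots,g_m)$ are Lipschitz continuous w.r.t. the continuous variables: $|h(x)-h(y)|\le L\|x-y\|$ for $h\in\{f,g_1,\dots,g_m\}$ whenever $x_z=y_z$. A vector in $\mathbb{Z}^p$ is primitive if the gcd of its components is 1. For $x\in X\cap\mathcal{Z}$: $D^z(x)=\{d\in\mathbb{Z}^n: d_i=0\ (i\in I^c),\ d_z\text{ primitive},\ x+d\in X\cap\mathcal{Z}\}$, $\mathcal{B}^z(x)=\{x+d: d\in D^z(x)\}$, $D^c(x)=\{s: s_i=0\ (i\in I^z),\ s_i\ge0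 \text{ if } i\in I^c,x_i=l_i,\ s_i\le0\text{ if } i\in I^c,x_i=u_i\}$. For $h$ Lipschitz w.r.t. continuous variables and $s$ with $s_z=0$: $h^{Cl}_{x_c}(x;s)=\limsup_{y_c\to x_c,\,y_z=x_z,\,t\downarrow0}\frac{h(y+ts)-h(y)}{t}$, $\partial_c h(x)=\{v: v_z=0,\ h^{Cl}_{x_c}(x;s)\ge s^\top v\ \forall s \text{ with } s_z=0\}$. Clarke stationary point of the penalized problem: $x\in X\cap\mathcal{Z}$ with $P^{Cl}_{x_c}(x;s)\ge0$ for all $s\in D^c(x)$ and $P(x;\varepsilon)\le P(y;\varepsilon)$ for all $y\in\mathcal{B}^z(x)$. KKT stationary point of the constrained problem: $x^*\in\mathcal{F}\cap\mathcal{Z}\cap X$ for which there is $\lambda\in\mathbb{R}^m$ with $\lambda\ge0$, $\lambda^\top g(x^* )=0$, $\max\{\xi^\top s: \xi\in\partial_c f(x^* )+\sum_{i=1}^m\lambda_i\partial_c g_i(x^* )\}\ge0$ for every $s\in D^c(x^* )$ (Minkowski sum of sets), and $f(x^* )\le f(x)$ for all $x\in\mathcal{B}^z(x^* )\cap\mathcal{F}$. EMFCQ: for every $x\in(X\cap\mathcal{Z})\setminus\operatorname{int}\mathcal{F}$, either (i) there is $s\in D^c(x)$ with $\xi^\top s<0$ for all $\xi\in\partial_c g_i(x)$ and all $i$ with $g_i(x)\ge0$; or (ii) there is $\bar d\in D^z(x)$ with $\sum_{i}\max\{0,g_i(x+\bar d)\}<\sum_{i}\max\{0,g_i(x)\}$.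 *)

theory Defs
  imports "HOL-Analysis.Analysis"
begin

text \<open>Points of R^n are vectors x :: real^'n; Ic, Iz are the continuous / integer index sets.
  Constraints g are indexed by i < m.\<close>

definition boxX :: "real^'n \<Rightarrow> real^'n \<Rightarrow> (real^'n) set" where
  "boxX l u = {x. \<forall>i. l$i \<le> x$i \<and> x$i \<le> u$i}"

definition intZ :: "'n set \<Rightarrow> (real^'n) set" where
  "intZ Iz = {x. \<forall>i\<in>Iz. x$i \<in> \<int>}"

definition feasF :: "nat \<Rightarrow> (nat \<Rightarrow> real^'n \<Rightarrow> real) \<Rightarrow> (real^'n) set" where
  "feasF m g = {x. \<forall>i<m. g i x \<le> 0}"

definition primitive_on :: "'n set \<Rightarrow> real^'n \<Rightarrow> bool" where
  "primitive_on Iz d \<longleftrightarrow> Gcd ((\<lambda>i. \<lfloor>d$i\<rfloor>) ` Iz) = (1::int)"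

definition Dz :: "'n set \<Rightarrow> 'n set \<Rightarrow> real^'n \<Rightarrow> real^'n \<Rightarrow> real^'n \<Rightarrow> (real^'n) set" where
  "Dz Ic Iz l u x = {d. (\<forall>i. d$i \<in> \<int>) \<and> (\<forall>i\<in>Ic. d$i = 0) \<and> primitive_on Iz d
       \<and> x + d \<in> boxX l u \<inter> intZ Iz}"

definition Bz :: "'n set \<Rightarrow> 'n set \<Rightarrow> real^'n \<Rightarrow> real^'n \<Rightarrow> real^'n \<Rightarrow> (real^'n) set" where
  "Bz Ic Iz l u x = {x + d | d. d \<in> Dz Ic Iz l u x}"

definition Dc :: "'n set \<Rightarrow> 'n set \<Rightarrow> real^'n \<Rightarrow> real^'n \<Rightarrow> real^'n \<Rightarrow> (real^'n) set" where
  "Dc Ic Iz l u x = {s. (\<forall>i\<in>Iz. s$i = 0) \<and> (\<forall>i\<in>Ic. x$i = l$i \<longrightarrow> s$i \<ge> 0)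
       \<and> (\<forall>i\<in>Ic. x$i = u$i \<longrightarrow> s$i \<le> 0)}"

definition clarke_dd :: "'n set \<Rightarrow> (real^'n \<Rightarrow> real) \<Rightarrow> real^'n \<Rightarrow> real^'n \<Rightarrow> ereal" where
  "clarke_dd Iz h x s =
     Limsup (inf (nhds x) (principal {y. \<forall>i\<in>Iz. y$i = x$i}) \<times>\<^sub>F at_right 0)
       (\<lambda>(y, t). ereal ((h (y + t *\<^sub>R s) - h y) / t))"

definition clarke_sub :: "'n set \<Rightarrow> (real^'n \<Rightarrow> real) \<Rightarrow> real^'n \<Rightarrow> (real^'n) set" where
  "clarke_sub Iz h x = {v. (\<forall>i\<in>Iz. v$i = 0) \<and>
       (\<forall>s. (\<forall>i\<in>Iz. s$i = 0) \<longrightarrow> clarke_dd Iz h x s \<ge> ereal (s \<bullet> v))}"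

definition penalty :: "nat \<Rightarrow> (nat \<Rightarrow> real^'n \<Rightarrow> real) \<Rightarrow> real^'n \<Rightarrow> real" where
  "penalty m g x = (\<Sum>i<m. max 0 (g i x))"

definition Pen :: "(real^'n \<Rightarrow> real) \<Rightarrow> nat \<Rightarrow> (nat \<Rightarrow> real^'n \<Rightarrow> real) \<Rightarrow> real \<Rightarrow> real^'n \<Rightarrow> real" where
  "Pen f m g \<epsilon> x = f x + (1 / \<epsilon>) * penalty m g x"

definition clarke_stationary_pen ::
  "'n set \<Rightarrow> 'n set \<Rightarrow> real^'n \<Rightarrow> real^'n \<Rightarrow> (real^'n \<Rightarrow> real) \<Rightarrow> nat \<Rightarrow>
   (nat \<Rightarrow> real^'n \<Rightarrow> real) \<Rightarrow> real \<Rightarrow> real^'n \<Rightarrow> bool" where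
  "clarke_stationary_pen Ic Iz l u f m g \<epsilon> x \<longleftrightarrow>
     x \<in> boxX l u \<inter> intZ Iz \<and>
     (\<forall>s\<in>Dc Ic Iz l u x. clarke_dd Iz (Pen f m g \<epsilon>) x s \<ge> 0) \<and>
     (\<forall>y\<in>Bz Ic Iz l u x. Pen f m g \<epsilon> x \<le> Pen f m g \<epsilon> y)"

definition kkt_set ::
  "'n set \<Rightarrow> (real^'n \<Rightarrow> real) \<Rightarrow> nat \<Rightarrow> (nat \<Rightarrow> real^'n \<Rightarrow> real) \<Rightarrow> (nat \<Rightarrow> real) \<Rightarrow> real^'n \<Rightarrow> (real^'n) set" where
  "kkt_set Iz f m g lam x = {a + (\<Sum>i<m. b i) | a b. a \<in> clarke_sub Iz f x \<and>
       (\<forall>i<m. b i \<in> (\<lambda>v. lam i *\<^sub>R v) ` clarke_sub Iz (g i) x)}"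

definition kkt_stationary ::
  "'n set \<Rightarrow> 'n set \<Rightarrow> real^'n \<Rightarrow> real^'n \<Rightarrow> (real^'n \<Rightarrow> real) \<Rightarrow> nat \<Rightarrow>
   (nat \<Rightarrow> real^'n \<Rightarrow> real) \<Rightarrow> real^'n \<Rightarrow> bool" where
  "kkt_stationary Ic Iz l u f m g x \<longleftrightarrow>
     x \<in> feasF m g \<inter> intZ Iz \<inter> boxX l u \<and>
     (\<exists>lam::nat \<Rightarrow> real. (\<forall>i<m. lam i \<ge> 0) \<and> (\<Sum>i<m. lam i * g i x) = 0 \<and>
        (\<forall>s\<in>Dc Ic Iz l u x. Sup ((\<lambda>\<xi>. ereal (\<xi> \<bullet> s)) ` kkt_set Iz f m g lam x) \<ge> 0)) \<and>
     (\<forall>y\<in>Bz Ic Iz l u x \<inter> feasF m g. f x \<le> f y)"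

definition EMFCQ ::
  "'n set \<Rightarrow> 'n set \<Rightarrow> real^'n \<Rightarrow> real^'n \<Rightarrow> nat \<Rightarrow> (nat \<Rightarrow> real^'n \<Rightarrow> real) \<Rightarrow> bool" where
  "EMFCQ Ic Iz l u m g \<longleftrightarrow>
     (\<forall>x\<in>(boxX l u \<inter> intZ Iz) - interior (feasF m g).
        (\<exists>s\<in>Dc Ic Iz l u x. \<forall>i<m. g i x \<ge> 0 \<longrightarrow> (\<forall>\<xi>\<in>clarke_sub Iz (g i) x. \<xi> \<bullet> s < 0))
      \<or> (\<exists>d\<in>Dz Ic Iz l u x. penalty m g (x + d) < penalty m g x))"

definition lipschitz_cont :: "'n set \<Rightarrow> real \<Rightarrow> (real^'n \<Rightarrow> real) \<Rightarrow> bool" where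
  "lipschitz_cont Iz L h \<longleftrightarrow>
     (\<forall>x y. (\<forall>i\<in>Iz. x$i = y$i) \<longrightarrow> \<bar>h x - h y\<bar> \<le> L * norm (x - y))"

end

theory Submission
  imports Defs
begin

text \<open>Since \<open>xbar\<close> is feasible, the penalty vanishes at \<open>xbar\<close> and at every feasible integer
  neighbour, so discrete minimality of \<open>P\<close> gives discrete minimality of \<open>f\<close>.  For the continuous
  part, Clarke calculus bounds \<open>P\<degree>(xbar; s)\<close> by the support function of the compact convex set
  \<open>\<partial>f + \<Sum>\<^sub>i conv {0, \<partial>g\<^sub>i / \<epsilon>}\<close> (active \<open>i\<close> only), every Clarke derivative being the support
  function of the corresponding subdifferential by Hahn--Banach.  Stationarity makes this support
  function nonnegative on the polyhedral cone \<open>Dc\<close>, and separating the compact set from the dual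
  cone of \<open>Dc\<close> yields a single element nonnegative on \<open>Dc\<close>; its decomposition provides multipliers
  \<open>\<lambda>\<^sub>i \<in> [0, 1/\<epsilon>]\<close> that vanish on inactive constraints.\<close>

section \<open>Sublinear functionals\<close>

definition sublinear :: "('a::real_vector \<Rightarrow> real) \<Rightarrow> bool" where
  "sublinear p \<longleftrightarrow> (\<forall>x y. p (x + y) \<le> p x + p y) \<and> (\<forall>c x. c > 0 \<longrightarrow> p (c *\<^sub>R x) \<le> c * p x)"

lemma sublinearD:
  assumes "sublinear p"
  shows sublinear_add: "p (x + y) \<le> p x + p y"
    and sublinear_scaleR_le: "c > 0 \<Longrightarrow> p (c *\<^sub>R x) \<le> c * p x"
  using assms by (auto simp: sublinear_def)

lemma sublinear_zero: "sublinear p \<Longrightarrow> p 0 = 0"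
  using sublinear_add[of p 0 0] sublinear_scaleR_le[of p "1/2" 0] by simp

lemma sublinear_scaleR:
  assumes "sublinear p" "c > 0"
  shows "p (c *\<^sub>R x) = c * p x"
proof -
  have "p x \<le> (1/c) * p (c *\<^sub>R x)" using sublinear_scaleR_le[OF assms(1), of "1/c" "c *\<^sub>R x"] \<open>c > 0\<close> by simp
  then show ?thesis using sublinear_scaleR_le[OF assms, of x] \<open>c > 0\<close> by (simp add: field_simps)
qed

lemma sublinear_line_le:
  assumes p: "sublinear p"
  shows "c * p s \<le> p (c *\<^sub>R s)"
proof (cases "c > 0")
  case True
  then show ?thesis using sublinear_scaleR[OF p] by simp
next
  case False
  have "- p s \<le> p (- s)" using sublinear_add[OF p, of s "-s"] sublinear_zero[OF p] by simp
  then have "(-c) * (- p s) \<le> (-c) * p (-s)" using False by (intro mult_left_mono) auto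
  also have "\<dots> = p ((-c) *\<^sub>R (-s))"
    using sublinear_scaleR[OF p, of "-c" "-s"] False sublinear_zero[OF p] by (cases "c = 0") auto
  finally show ?thesis by simp
qed

lemma sublinear_convex_on:
  assumes p: "sublinear p"
  shows "convex_on UNIV p"
proof (rule convex_onI)
  fix t :: real and x y assume "0 < t" "t < 1"
  then show "p ((1 - t) *\<^sub>R x + t *\<^sub>R y) \<le> (1 - t) * p x + t * p y"
    using sublinear_add[OF p, of "(1 - t) *\<^sub>R x" "t *\<^sub>R y"]
      sublinear_scaleR_le[OF p, of "1 - t" x] sublinear_scaleR_le[OF p, of t y]
    by linarith
qed simp

lemma convex_strict_epigraph:
  assumes "convex_on UNIV p"
  shows "convex {z. p (fst z) < snd z}"
proof (rule convexI, clarsimp)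
  fix a b and r q u v :: real
  assume h: "p a < r" "p b < q" "0 \<le> u" "0 \<le> v" "u + v = 1"
  have u: "u = 1 - v" using h(5) by simp
  have "p (u *\<^sub>R a + v *\<^sub>R b) \<le> u * p a + v * p b"
    using convex_onD[OF assms, of v a b] h(3-5) unfolding u by simp
  also have "\<dots> < u * r + v * q"
  proof (cases "u = 0")
    case False
    then have "u * p a < u * r" using h by simp
    moreover have "v * p b \<le> v * q" using h by (simp add: mult_left_mono)
    ultimately show ?thesis by linarith
  qed (use h in simp)
  finally show "p (u *\<^sub>R a + v *\<^sub>R b) < u * r + v * q" .
qed

lemma sublinear_epigraph_line_separation:
  fixes p :: "'a::euclidean_space \<Rightarrow> real"
  assumes p: "sublinear p"
  obtains w k b where "(w, k) \<noteq> 0" "b \<le> 0" "inner w s + k * p s = 0"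
    and "\<And>t r. p t < r \<Longrightarrow> inner w t + k * r \<le> b"
proof -
  define A where "A = {z :: 'a \<times> real. p (fst z) < snd z}"
  define B where "B = range (\<lambda>c::real. (c *\<^sub>R s, c * p s))"
  have "convex A" unfolding A_def using sublinear_convex_on[OF p] by (rule convex_strict_epigraph)
  moreover have "convex B"
    unfolding B_def convex_def by (auto simp: algebra_simps intro!: range_eqI[of _ _ "_ * _ + _ * _"])
  moreover have "(0, 1) \<in> A" using sublinear_zero[OF p] by (simp add: A_def)
  then have "A \<noteq> {}" by blast
  moreover have "B \<noteq> {}" by (simp add: B_def)
  moreover have "z \<notin> A" if "z \<in> B" for z
    using that sublinear_line_le[OF p] by (auto simp: A_def B_def not_less)
  then have "A \<inter> B = {}" by blast
  ultimately obtain a b where "a \<noteq> 0" and A_le: "\<forall>z\<in>A. inner a z \<le> b" and B_ge: "\<forall>z\<in>B. inner a z \<ge> b"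
    by (metis separating_hyperplane_sets)
  obtain w k where a: "a = (w, k)" by (cases a)
  have line: "b \<le> c * (inner w s + k * p s)" for c
    using B_ge unfolding B_def a by (auto simp: algebra_simps)
  show thesis
  proof (rule that)
    show "(w, k) \<noteq> 0" using \<open>a \<noteq> 0\<close> a by simp
    show "b \<le> 0" using line[of 0] by simp
    show "inner w s + k * p s = 0"
      using line[of "(b - 1) / (inner w s + k * p s)"] by (cases "inner w s + k * p s = 0") auto
    show "inner w t + k * r \<le> b" if "p t < r" for t r
      using A_le that unfolding A_def a by auto
  qed
qed

text \<open>The hyperplane separating the strict epigraph of \<open>p\<close> from
  the line through \<open>(s, p s)\<close> cannot be vertical, so it is the graph of a linear functional.\<close>
lemma sublinear_supporting_inner:
  fixes p :: "'a::euclidean_space \<Rightarrow> real"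
  assumes p: "sublinear p"
  obtains v where "\<And>t. inner v t \<le> p t" "inner v s = p s"
proof -
  obtain w k b where "(w, k) \<noteq> 0" "b \<le> 0" and on_line: "inner w s + k * p s = 0"
    and above: "\<And>t r. p t < r \<Longrightarrow> inner w t + k * r \<le> b"
    using sublinear_epigraph_line_separation[OF p, of s] by blast
  have "k < 0"
  proof (rule ccontr)
    assume "\<not> k < 0"
    then consider "k = 0" | "k > 0" by linarith
    then show False
    proof cases
      case 1
      then have "inner w w \<le> 0" using above[of w "p w + 1"] \<open>b \<le> 0\<close> by simp
      then have "w = 0" by (meson inner_gt_zero_iff not_le)
      then show False using \<open>(w, k) \<noteq> 0\<close> 1 by (simp add: zero_prod_def)
    next
      case 2
      then have "k * (\<bar>b\<bar> + 1) > 0" by simp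
      then show False using above[of 0 "\<bar>b\<bar> + 1"] \<open>b \<le> 0\<close> sublinear_zero[OF p] by simp
    qed
  qed
  have below: "inner w t + k * p t \<le> 0" for t
  proof (rule field_le_epsilon)
    fix e :: real assume "e > 0"
    then have "e / k < 0" using \<open>k < 0\<close> by (simp add: divide_pos_neg)
    then show "inner w t + k * p t \<le> 0 + e"
      using above[of t "p t + e / (- k)"] \<open>k < 0\<close> \<open>b \<le> 0\<close> by (simp add: algebra_simps)
  qed
  show thesis
  proof (rule that[of "(- 1 / k) *\<^sub>R w"])
    show "inner ((- 1 / k) *\<^sub>R w) t \<le> p t" for t using below[of t] \<open>k < 0\<close> by (simp add: field_simps)
    show "inner ((- 1 / k) *\<^sub>R w) s = p s" using on_line \<open>k < 0\<close> by (simp add: field_simps)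
  qed
qed

section \<open>The Clarke directional derivative\<close>

definition clarke_filter :: "'n set \<Rightarrow> real^'n \<Rightarrow> ((real^'n) \<times> real) filter" where
  "clarke_filter Iz x = inf (nhds x) (principal {y. \<forall>i\<in>Iz. y$i = x$i}) \<times>\<^sub>F at_right 0"

definition diff_quot :: "(real^'n \<Rightarrow> real) \<Rightarrow> real^'n \<Rightarrow> (real^'n) \<times> real \<Rightarrow> real" where
  "diff_quot h s z = (h (fst z + snd z *\<^sub>R s) - h (fst z)) / snd z"

abbreviation clarke_dd_real :: "'n set \<Rightarrow> (real^'n \<Rightarrow> real) \<Rightarrow> real^'n \<Rightarrow> real^'n \<Rightarrow> real" where
  "clarke_dd_real Iz h x s \<equiv> real_of_ereal (clarke_dd Iz h x s)"

lemma clarke_dd_eq_Limsup: "clarke_dd Iz h x s = Limsup (clarke_filter Iz x) (\<lambda>z. ereal (diff_quot h s z))"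
  unfolding clarke_dd_def clarke_filter_def diff_quot_def
  by (intro arg_cong[where f = "Limsup _"] ext) (simp add: case_prod_beta)

lemma eventually_clarke_filter:
  "eventually P (clarke_filter Iz x) \<longleftrightarrow>
    (\<exists>r>0. \<exists>\<tau>>0. \<forall>y t. (\<forall>i\<in>Iz. y$i = x$i) \<longrightarrow> dist y x < r \<longrightarrow> 0 < t \<longrightarrow> t < \<tau> \<longrightarrow> P (y, t))"
    (is "_ \<longleftrightarrow> (\<exists>r>0. \<exists>\<tau>>0. ?near r \<tau>)")
proof
  assume "eventually P (clarke_filter Iz x)"
  then obtain Py Pt where
    "eventually Py (inf (nhds x) (principal {y. \<forall>i\<in>Iz. y$i = x$i}))"
    "eventually Pt (at_right (0::real))" and P: "\<forall>y t. Py y \<longrightarrow> Pt t \<longrightarrow> P (y, t)"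
    unfolding clarke_filter_def eventually_prod_filter by blast
  then obtain r \<tau> where "r > 0" "\<forall>y. dist y x < r \<longrightarrow> (\<forall>i\<in>Iz. y$i = x$i) \<longrightarrow> Py y"
    and "\<tau> > 0" "\<forall>t>0. t < \<tau> \<longrightarrow> Pt t"
    unfolding eventually_inf_principal eventually_nhds_metric eventually_at_right_field by auto
  then show "\<exists>r>0. \<exists>\<tau>>0. ?near r \<tau>" using P by blast
next
  assume "\<exists>r>0. \<exists>\<tau>>0. ?near r \<tau>"
  then obtain r \<tau> where "r > 0" "\<tau> > 0" "?near r \<tau>" by blast
  moreover have "eventually (\<lambda>y. (\<forall>i\<in>Iz. y$i = x$i) \<and> dist y x < r)
      (inf (nhds x) (principal {y. \<forall>i\<in>Iz. y$i = x$i}))"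
    unfolding eventually_inf_principal eventually_nhds_metric using \<open>r > 0\<close> by auto
  moreover have "eventually (\<lambda>t. 0 < t \<and> t < \<tau>) (at_right (0::real))"
    unfolding eventually_at_right_field using \<open>\<tau> > 0\<close> by auto
  ultimately show "eventually P (clarke_filter Iz x)"
    unfolding clarke_filter_def eventually_prod_filter by blast
qed

lemma eventually_clarke_filterI:
  assumes "r > 0" "\<tau> > 0"
    and "\<And>y t. \<forall>i\<in>Iz. y$i = x$i \<Longrightarrow> dist y x < r \<Longrightarrow> 0 < t \<Longrightarrow> t < \<tau> \<Longrightarrow> P (y, t)"
  shows "eventually P (clarke_filter Iz x)"
  unfolding eventually_clarke_filter using assms by blast

lemma eventually_clarke_filterE:
  assumes "eventually P (clarke_filter Iz x)"
  obtains r \<tau> where "r > 0" "\<tau> > 0"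
    and "\<And>y t. \<forall>i\<in>Iz. y$i = x$i \<Longrightarrow> dist y x < r \<Longrightarrow> 0 < t \<Longrightarrow> t < \<tau> \<Longrightarrow> P (y, t)"
  using assms unfolding eventually_clarke_filter by blast

lemma clarke_filter_not_bot: "clarke_filter Iz x \<noteq> bot"
proof
  assume "clarke_filter Iz x = bot"
  then have "eventually (\<lambda>_. False) (clarke_filter Iz x)" by simp
  then obtain r \<tau> :: real where "r > 0" "\<tau> > 0"
    and never: "\<And>y t. \<forall>i\<in>Iz. y$i = x$i \<Longrightarrow> dist y x < r \<Longrightarrow> 0 < t \<Longrightarrow> t < \<tau> \<Longrightarrow> False"
    by (rule eventually_clarke_filterE) blast
  then show False using never[of x "\<tau> / 2"] by simp
qed

lemma eventually_clarke_filter_pos: "eventually (\<lambda>z. snd z > 0) (clarke_filter Iz x)"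
  by (rule eventually_clarke_filterI[of 1 1]) auto

lemma eventually_clarke_filter_fst:
  assumes "eventually P (inf (nhds x) (principal {y. \<forall>i\<in>Iz. y$i = x$i}))"
  shows "eventually (\<lambda>z. P (fst z)) (clarke_filter Iz x)"
  using assms unfolding clarke_filter_def eventually_prod_filter
  by (intro exI[of _ P] exI[of _ "\<lambda>_. True"]) simp

lemma eventually_clarke_filter_shift:
  assumes "\<forall>i\<in>Iz. s$i = 0" "eventually P (clarke_filter Iz x)"
  shows "eventually (\<lambda>z. P (fst z + snd z *\<^sub>R s, snd z)) (clarke_filter Iz x)"
proof -
  obtain r \<tau> where "r > 0" "\<tau> > 0"
    and P: "\<And>y t. \<forall>i\<in>Iz. y$i = x$i \<Longrightarrow> dist y x < r \<Longrightarrow> 0 < t \<Longrightarrow> t < \<tau> \<Longrightarrow> P (y, t)"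
    using eventually_clarke_filterE[OF assms(2)] by blast
  define \<rho> where "\<rho> = norm s + 1"
  have "\<rho> > 0" by (simp add: \<rho>_def add_nonneg_pos)
  define \<tau>' where "\<tau>' = min \<tau> (r / (2 * \<rho>))"
  have "\<tau>' > 0" using \<open>r > 0\<close> \<open>\<tau> > 0\<close> \<open>\<rho> > 0\<close> by (simp add: \<tau>'_def)
  show ?thesis
  proof (rule eventually_clarke_filterI[of "r/2" \<tau>'])
    fix y and t :: real
    assume y: "\<forall>i\<in>Iz. y$i = x$i" "dist y x < r/2" "0 < t" "t < \<tau>'"
    have "t * norm s \<le> r / (2 * \<rho>) * \<rho>"
      using y(3,4) \<open>\<rho> > 0\<close> by (intro mult_mono) (auto simp: \<tau>'_def \<rho>_def)
    also have "\<dots> = r / 2" using \<open>\<rho> > 0\<close> by simp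
    finally have "dist (y + t *\<^sub>R s) x < r"
      using y(2,3) norm_triangle_ineq[of "y - x" "t *\<^sub>R s"] by (simp add: dist_norm algebra_simps)
    moreover have "\<forall>i\<in>Iz. (y + t *\<^sub>R s)$i = x$i" using y(1) assms(1) by simp
    ultimately show "P (fst (y, t) + snd (y, t) *\<^sub>R s, snd (y, t))"
      using P y(3,4) by (simp add: \<tau>'_def)
  qed (use \<open>r > 0\<close> \<open>\<tau>' > 0\<close> in auto)
qed

lemma eventually_clarke_filter_scale:
  assumes "c > 0" "eventually P (clarke_filter Iz x)"
  shows "eventually (\<lambda>z. P (fst z, c * snd z)) (clarke_filter Iz x)"
proof -
  obtain r \<tau> where "r > 0" "\<tau> > 0"
    and P: "\<And>y t. \<forall>i\<in>Iz. y$i = x$i \<Longrightarrow> dist y x < r \<Longrightarrow> 0 < t \<Longrightarrow> t < \<tau> \<Longrightarrow> P (y, t)"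
    using eventually_clarke_filterE[OF assms(2)] by blast
  show ?thesis
  proof (rule eventually_clarke_filterI[of r "\<tau> / c"])
    fix y and t :: real
    assume "\<forall>i\<in>Iz. y$i = x$i" "dist y x < r" "0 < t" "t < \<tau> / c"
    then show "P (fst (y, t), c * snd (y, t))"
      using P assms(1) by (simp add: field_simps)
  qed (use \<open>r > 0\<close> \<open>\<tau> > 0\<close> assms(1) in auto)
qed

lemma lipschitz_diff_quot_bound:
  assumes "lipschitz_cont Iz L h" "\<forall>i\<in>Iz. s$i = 0" "\<forall>i\<in>Iz. y$i = x$i" "t > 0"
  shows "\<bar>diff_quot h s (y, t)\<bar> \<le> L * norm s"
proof -
  have "\<forall>i\<in>Iz. (y + t *\<^sub>R s)$i = y$i" using assms(2) by simp
  then have "\<bar>h (y + t *\<^sub>R s) - h y\<bar> \<le> L * norm ((y + t *\<^sub>R s) - y)"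
    using assms(1) unfolding lipschitz_cont_def by blast
  then show ?thesis
    using \<open>t > 0\<close> by (simp add: diff_quot_def abs_divide pos_divide_le_eq ac_simps)
qed

lemma clarke_dd_finite:
  assumes "lipschitz_cont Iz L h" "\<forall>i\<in>Iz. s$i = 0"
  shows "clarke_dd Iz h x s = ereal (clarke_dd_real Iz h x s)"
    and "\<bar>clarke_dd_real Iz h x s\<bar> \<le> L * norm s"
proof -
  have bound: "eventually (\<lambda>z. \<bar>diff_quot h s z\<bar> \<le> L * norm s) (clarke_filter Iz x)"
    using lipschitz_diff_quot_bound[OF assms] by (intro eventually_clarke_filterI[of 1 1]) auto
  have "clarke_dd Iz h x s \<le> ereal (L * norm s)" unfolding clarke_dd_eq_Limsup
    by (rule Limsup_bounded) (use bound in \<open>auto elim!: eventually_mono\<close>)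
  moreover have "ereal (- (L * norm s)) \<le> clarke_dd Iz h x s" unfolding clarke_dd_eq_Limsup
    by (rule le_Limsup[OF clarke_filter_not_bot]) (use bound in \<open>auto elim!: eventually_mono\<close>)
  ultimately show "clarke_dd Iz h x s = ereal (clarke_dd_real Iz h x s)"
    and "\<bar>clarke_dd_real Iz h x s\<bar> \<le> L * norm s"
    by (cases "clarke_dd Iz h x s"; simp)+
qed

lemma clarke_dd_le_ereal_iff:
  assumes "lipschitz_cont Iz L h" "\<forall>i\<in>Iz. s$i = 0"
  shows "clarke_dd Iz h x s \<le> ereal c \<longleftrightarrow> clarke_dd_real Iz h x s \<le> c"
    and "ereal c \<le> clarke_dd Iz h x s \<longleftrightarrow> c \<le> clarke_dd_real Iz h x s"
  by (subst clarke_dd_finite(1)[OF assms]; simp)+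

lemma clarke_dd_le_if_eventually:
  assumes "eventually (\<lambda>z. diff_quot h s z \<le> c) (clarke_filter Iz x)"
  shows "clarke_dd Iz h x s \<le> ereal c"
  unfolding clarke_dd_eq_Limsup by (rule Limsup_bounded) (use assms in \<open>auto elim!: eventually_mono\<close>)

lemma eventually_diff_quot_less:
  assumes "lipschitz_cont Iz L h" "\<forall>i\<in>Iz. s$i = 0" "\<delta> > 0"
  shows "eventually (\<lambda>z. diff_quot h s z < clarke_dd_real Iz h x s + \<delta>) (clarke_filter Iz x)"
proof -
  obtain c where "clarke_dd Iz h x s = ereal c" using clarke_dd_finite(1)[OF assms(1,2)] by blast
  then have "clarke_dd Iz h x s < ereal (clarke_dd_real Iz h x s + \<delta>)" using \<open>\<delta> > 0\<close> by simp
  then have "Limsup (clarke_filter Iz x) (\<lambda>z. ereal (diff_quot h s z)) < ereal (clarke_dd_real Iz h x s + \<delta>)"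
    by (simp only: clarke_dd_eq_Limsup)
  from Limsup_lessD[OF this] show ?thesis by simp
qed

lemma clarke_dd_zero: "clarke_dd Iz h x 0 = 0"
  unfolding clarke_dd_eq_Limsup diff_quot_def
  using clarke_filter_not_bot[of Iz x] by (simp add: zero_ereal_def Limsup_const)

lemma clarke_dd_subadditive:
  assumes h: "lipschitz_cont Iz L h" and "\<forall>i\<in>Iz. s1$i = 0" "\<forall>i\<in>Iz. s2$i = 0"
  shows "clarke_dd_real Iz h x (s1 + s2) \<le> clarke_dd_real Iz h x s1 + clarke_dd_real Iz h x s2"
proof (rule field_le_epsilon)
  fix e :: real assume "e > 0"
  have "eventually (\<lambda>z. diff_quot h s1 z < clarke_dd_real Iz h x s1 + e/2) (clarke_filter Iz x)"
    using eventually_diff_quot_less[OF h assms(2)] \<open>e > 0\<close> by simp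
  moreover have "eventually (\<lambda>z. diff_quot h s2 (fst z + snd z *\<^sub>R s1, snd z) < clarke_dd_real Iz h x s2 + e/2)
      (clarke_filter Iz x)"
    using eventually_clarke_filter_shift[OF assms(2) eventually_diff_quot_less[OF h assms(3)]] \<open>e > 0\<close>
    by simp
  ultimately have "eventually (\<lambda>z. diff_quot h (s1 + s2) z \<le> clarke_dd_real Iz h x s1 + clarke_dd_real Iz h x s2 + e)
      (clarke_filter Iz x)"
    using eventually_clarke_filter_pos
  proof eventually_elim
    case (elim z)
    have "diff_quot h (s1 + s2) z = diff_quot h s2 (fst z + snd z *\<^sub>R s1, snd z) + diff_quot h s1 z"
      using \<open>snd z > 0\<close> by (simp add: diff_quot_def add_divide_distrib[symmetric] algebra_simps)
    then show ?case using elim by simp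
  qed
  then have "clarke_dd Iz h x (s1 + s2) \<le> ereal (clarke_dd_real Iz h x s1 + clarke_dd_real Iz h x s2 + e)"
    by (rule clarke_dd_le_if_eventually)
  then show "clarke_dd_real Iz h x (s1 + s2) \<le> clarke_dd_real Iz h x s1 + clarke_dd_real Iz h x s2 + e"
    using clarke_dd_le_ereal_iff(1)[OF h, of "s1 + s2"] assms(2,3) by simp
qed

lemma clarke_dd_pos_homogeneous:
  assumes h: "lipschitz_cont Iz L h" and s: "\<forall>i\<in>Iz. s$i = 0" and "c > 0"
  shows "clarke_dd_real Iz h x (c *\<^sub>R s) \<le> c * clarke_dd_real Iz h x s"
proof (rule field_le_epsilon)
  fix e :: real assume "e > 0"
  have "eventually (\<lambda>z. diff_quot h s (fst z, c * snd z) < clarke_dd_real Iz h x s + e / c) (clarke_filter Iz x)"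
    using eventually_clarke_filter_scale[OF \<open>c > 0\<close> eventually_diff_quot_less[OF h s]] \<open>e > 0\<close> \<open>c > 0\<close>
    by simp
  then have "eventually (\<lambda>z. diff_quot h (c *\<^sub>R s) z \<le> c * clarke_dd_real Iz h x s + e) (clarke_filter Iz x)"
    using eventually_clarke_filter_pos
  proof eventually_elim
    case (elim z)
    have "diff_quot h (c *\<^sub>R s) z = c * diff_quot h s (fst z, c * snd z)"
      using \<open>snd z > 0\<close> \<open>c > 0\<close> by (simp add: diff_quot_def mult.commute)
    also have "\<dots> \<le> c * (clarke_dd_real Iz h x s + e / c)"
      using elim \<open>c > 0\<close> by (intro mult_left_mono) auto
    also have "\<dots> = c * clarke_dd_real Iz h x s + e" using \<open>c > 0\<close> by (simp add: distrib_left)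
    finally show ?case .
  qed
  then have "clarke_dd Iz h x (c *\<^sub>R s) \<le> ereal (c * clarke_dd_real Iz h x s + e)"
    by (rule clarke_dd_le_if_eventually)
  then show "clarke_dd_real Iz h x (c *\<^sub>R s) \<le> c * clarke_dd_real Iz h x s + e"
    using clarke_dd_le_ereal_iff(1)[OF h, of "c *\<^sub>R s"] s by simp
qed

section \<open>Clarke subdifferentials\<close>

definition zero_on :: "'n set \<Rightarrow> real^'n \<Rightarrow> real^'n" where
  "zero_on Iz t = (\<chi> i. if i \<in> Iz then 0 else t$i)"

lemma zero_on_components: "\<forall>i\<in>Iz. zero_on Iz t $ i = 0"
  and zero_on_add: "zero_on Iz (a + b) = zero_on Iz a + zero_on Iz b"
  and zero_on_scaleR: "zero_on Iz (c *\<^sub>R a) = c *\<^sub>R zero_on Iz a"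
  and zero_on_axis: "j \<in> Iz \<Longrightarrow> zero_on Iz (axis j c) = 0"
  and zero_on_id: "\<forall>i\<in>Iz. s$i = 0 \<Longrightarrow> zero_on Iz s = s"
  by (auto simp: zero_on_def vec_eq_iff axis_def)

text \<open>Hahn--Banach is applied to \<open>t \<mapsto> h\<degree>(x; t)\<close> after killing the integer components of \<open>t\<close>,
  which makes it sublinear on the whole space and forces the support vector to vanish on \<open>Iz\<close>.\<close>
lemma clarke_sub_supporting:
  assumes h: "lipschitz_cont Iz L h" and s: "\<forall>i\<in>Iz. s$i = 0"
  shows "\<exists>v\<in>clarke_sub Iz h x. inner s v = clarke_dd_real Iz h x s"
proof -
  define p where "p t = clarke_dd_real Iz h x (zero_on Iz t)" for t
  have "sublinear p"
    unfolding sublinear_def p_def zero_on_add zero_on_scaleR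
    using clarke_dd_subadditive[OF h zero_on_components zero_on_components]
      clarke_dd_pos_homogeneous[OF h zero_on_components] by blast
  then obtain v where v_le: "\<And>t. inner v t \<le> p t" and v_eq: "inner v s = p s"
    using sublinear_supporting_inner[where s = s] by blast
  have "\<forall>i\<in>Iz. v$i = 0"
  proof
    fix j assume "j \<in> Iz"
    then have "p (axis j c) = 0" for c by (simp add: p_def zero_on_axis clarke_dd_zero)
    then show "v$j = 0" using v_le[of "axis j 1"] v_le[of "axis j (-1)"] by (simp add: inner_axis)
  qed
  moreover have "inner s' v \<le> clarke_dd_real Iz h x s'" if "\<forall>i\<in>Iz. s'$i = 0" for s'
    using v_le[of s'] by (simp add: p_def zero_on_id[OF that] inner_commute)
  ultimately have "v \<in> clarke_sub Iz h x"
    unfolding clarke_sub_def using clarke_dd_le_ereal_iff(2)[OF h] by simp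
  moreover have "inner s v = clarke_dd_real Iz h x s"
    using v_eq by (simp add: p_def zero_on_id[OF s] inner_commute)
  ultimately show ?thesis by blast
qed

lemma clarke_sub_eq:
  assumes "lipschitz_cont Iz L h"
  shows "clarke_sub Iz h x =
    {v. (\<forall>i\<in>Iz. v$i = 0) \<and> (\<forall>s. (\<forall>i\<in>Iz. s$i = 0) \<longrightarrow> inner s v \<le> clarke_dd_real Iz h x s)}"
  unfolding clarke_sub_def using clarke_dd_le_ereal_iff(2)[OF assms] by (auto simp: inner_commute)

lemma clarke_sub_nonempty: "lipschitz_cont Iz L h \<Longrightarrow> clarke_sub Iz h x \<noteq> {}"
  using clarke_sub_supporting[of Iz L h 0] by auto

lemma clarke_sub_eq_Inter:
  assumes "lipschitz_cont Iz L h"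
  shows "clarke_sub Iz h x = (\<Inter>i\<in>Iz. {v. inner (axis i 1) v = 0}) \<inter>
    (\<Inter>s\<in>{s. \<forall>i\<in>Iz. s$i = 0}. {v. inner s v \<le> clarke_dd_real Iz h x s})"
  unfolding clarke_sub_eq[OF assms] by (auto simp: inner_axis')

lemma convex_clarke_sub: "lipschitz_cont Iz L h \<Longrightarrow> convex (clarke_sub Iz h x)"
  unfolding clarke_sub_eq_Inter by (intro convex_Int convex_INT convex_hyperplane convex_halfspace_le)

lemma compact_clarke_sub:
  assumes h: "lipschitz_cont Iz L h"
  shows "compact (clarke_sub Iz h x)"
proof -
  have "closed (clarke_sub Iz h x)" unfolding clarke_sub_eq_Inter[OF h]
    by (intro closed_Int closed_INT ballI closed_hyperplane closed_halfspace_le)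
  moreover have "norm v \<le> \<bar>L\<bar>" if "v \<in> clarke_sub Iz h x" for v
  proof -
    have "\<forall>i\<in>Iz. v$i = 0" "inner v v \<le> clarke_dd_real Iz h x v"
      using that unfolding clarke_sub_eq[OF h] by auto
    moreover have "clarke_dd_real Iz h x v \<le> L * norm v"
      using abs_le_D1[OF clarke_dd_finite(2)[OF h]] \<open>\<forall>i\<in>Iz. v$i = 0\<close> .
    moreover have "L * norm v \<le> \<bar>L\<bar> * norm v" by (simp add: mult_right_mono)
    ultimately have "norm v * norm v \<le> \<bar>L\<bar> * norm v"
      by (simp add: power2_norm_eq_inner[symmetric] power2_eq_square)
    then show ?thesis by (cases "norm v = 0") (auto simp: mult_le_cancel_right)
  qed
  then have "bounded (clarke_sub Iz h x)" unfolding bounded_iff by blast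
  ultimately show ?thesis by (simp add: compact_eq_bounded_closed)
qed

section \<open>The penalty function\<close>

lemma diff_quot_pos_part_le:
  assumes "snd z > 0"
  shows "diff_quot (\<lambda>y. max 0 (h y)) s z \<le> max 0 (diff_quot h s z)"
proof -
  have "max 0 (h (fst z + snd z *\<^sub>R s)) - max 0 (h (fst z)) \<le> max 0 (h (fst z + snd z *\<^sub>R s) - h (fst z))"
    by simp
  then have "(max 0 (h (fst z + snd z *\<^sub>R s)) - max 0 (h (fst z))) / snd z
      \<le> max 0 (h (fst z + snd z *\<^sub>R s) - h (fst z)) / snd z"
    using assms by (intro divide_right_mono) auto
  then show ?thesis using assms by (simp add: diff_quot_def max_divide_distrib_right)
qed

lemma diff_quot_Pen:
  assumes "snd z \<noteq> 0"
  shows "diff_quot (Pen f m g \<epsilon>) s z = diff_quot f s z + (1/\<epsilon>) * (\<Sum>i<m. diff_quot (\<lambda>y. max 0 (g i y)) s z)"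
  using assms unfolding diff_quot_def Pen_def penalty_def
  by (cases "\<epsilon> = 0") (simp_all add: sum_divide_distrib[symmetric] sum_subtractf field_simps)

lemma eventually_lipschitz_neg:
  assumes h: "lipschitz_cont Iz L h" and "h x < 0"
  shows "eventually (\<lambda>y. h y < 0) (inf (nhds x) (principal {y. \<forall>i\<in>Iz. y$i = x$i}))"
  unfolding eventually_inf_principal eventually_nhds_metric
proof (intro exI[of _ "- h x / (\<bar>L\<bar> + 1)"] conjI allI impI)
  show "- h x / (\<bar>L\<bar> + 1) > 0" using \<open>h x < 0\<close> by (intro divide_pos_pos) auto
next
  fix y assume d: "dist y x < - h x / (\<bar>L\<bar> + 1)" and "y \<in> {y. \<forall>i\<in>Iz. y$i = x$i}"
  have "(\<bar>L\<bar> + 1) * dist y x < (\<bar>L\<bar> + 1) * (- h x / (\<bar>L\<bar> + 1))"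
    using d by (intro mult_strict_left_mono) auto
  then have "(\<bar>L\<bar> + 1) * dist y x < - h x"
    by (simp add: add_nonneg_pos)
  moreover have "\<bar>h y - h x\<bar> \<le> L * dist y x"
    using h \<open>y \<in> _\<close> unfolding lipschitz_cont_def by (simp add: dist_norm)
  moreover have "L * dist y x \<le> (\<bar>L\<bar> + 1) * dist y x" by (simp add: mult_right_mono)
  ultimately show "h y < 0" by linarith
qed

lemma eventually_diff_quot_pos_part_le:
  assumes h: "lipschitz_cont Iz L h" and s: "\<forall>i\<in>Iz. s$i = 0" and "h x \<le> 0" "\<delta> > 0"
  shows "eventually (\<lambda>z. diff_quot (\<lambda>y. max 0 (h y)) s z \<le>
    (if h x = 0 then max 0 (clarke_dd_real Iz h x s) else 0) + \<delta>) (clarke_filter Iz x)"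
proof (cases "h x = 0")
  case True
  show ?thesis
    using eventually_diff_quot_less[OF h s \<open>\<delta> > 0\<close>] eventually_clarke_filter_pos
  proof eventually_elim
    case (elim z)
    then have "diff_quot (\<lambda>y. max 0 (h y)) s z \<le> max 0 (diff_quot h s z)"
      by (intro diff_quot_pos_part_le)
    also have "\<dots> \<le> max 0 (clarke_dd_real Iz h x s) + \<delta>" using elim \<open>\<delta> > 0\<close> by simp
    finally show ?case using True by simp
  qed
next
  case False
  then have "h x < 0" using \<open>h x \<le> 0\<close> by simp
  note near = eventually_clarke_filter_fst[OF eventually_lipschitz_neg[OF h this]]
  show ?thesis
    using near eventually_clarke_filter_shift[OF s near]
  proof eventually_elim
    case (elim z)
    then show ?case using False \<open>\<delta> > 0\<close> by (simp add: diff_quot_def)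
  qed
qed

text \<open>Inactive constraints drop out because they stay negative near \<open>x\<close> (Lipschitz continuity);
  this bound is the source of the multipliers \<open>\<lambda>\<^sub>i \<in> [0, 1/\<epsilon>]\<close>.\<close>
lemma clarke_dd_Pen_le:
  assumes f: "lipschitz_cont Iz L f" and g: "\<forall>i<m. lipschitz_cont Iz L (g i)"
    and feas: "\<forall>i<m. g i x \<le> 0" and "\<epsilon> > 0" and s: "\<forall>i\<in>Iz. s$i = 0"
  shows "clarke_dd Iz (Pen f m g \<epsilon>) x s \<le> ereal (clarke_dd_real Iz f x s +
    (1/\<epsilon>) * (\<Sum>i<m. if g i x = 0 then max 0 (clarke_dd_real Iz (g i) x s) else 0))"
    (is "_ \<le> ereal (_ + (1/\<epsilon>) * (\<Sum>i<m. ?\<psi> i))")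
proof (rule ereal_le_epsilon2)
  fix e :: real assume "e > 0"
  define K where "K = 1 + real m / \<epsilon>"
  have "K > 0" using \<open>\<epsilon> > 0\<close> by (simp add: K_def add_pos_nonneg)
  define \<delta> where "\<delta> = e / K"
  have "\<delta> > 0" using \<open>e > 0\<close> \<open>K > 0\<close> by (simp add: \<delta>_def)
  have "eventually (\<lambda>z. \<forall>i\<in>{..<m}. diff_quot (\<lambda>y. max 0 (g i y)) s z \<le> ?\<psi> i + \<delta>) (clarke_filter Iz x)"
    using eventually_diff_quot_pos_part_le[OF g[rule_format] s feas[rule_format] \<open>\<delta> > 0\<close>]
    by (intro eventually_ball_finite) auto
  then have "eventually (\<lambda>z. diff_quot (Pen f m g \<epsilon>) s z \<le>
      clarke_dd_real Iz f x s + (1/\<epsilon>) * (\<Sum>i<m. ?\<psi> i) + e) (clarke_filter Iz x)"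
    using eventually_diff_quot_less[OF f s \<open>\<delta> > 0\<close>] eventually_clarke_filter_pos
  proof eventually_elim
    case (elim z)
    then have "(\<Sum>i<m. diff_quot (\<lambda>y. max 0 (g i y)) s z) \<le> (\<Sum>i<m. ?\<psi> i) + real m * \<delta>"
      using sum_mono[of "{..<m}" _ "\<lambda>i. ?\<psi> i + \<delta>"] by (simp add: sum.distrib)
    then have "(1/\<epsilon>) * (\<Sum>i<m. diff_quot (\<lambda>y. max 0 (g i y)) s z) \<le> (1/\<epsilon>) * ((\<Sum>i<m. ?\<psi> i) + real m * \<delta>)"
      using \<open>\<epsilon> > 0\<close> by (intro mult_left_mono) auto
    then have "diff_quot (Pen f m g \<epsilon>) s z \<le>
        (clarke_dd_real Iz f x s + \<delta>) + (1/\<epsilon>) * ((\<Sum>i<m. ?\<psi> i) + real m * \<delta>)"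
      using elim diff_quot_Pen[of z f m g \<epsilon> s] by linarith
    also have "\<dots> = clarke_dd_real Iz f x s + (1/\<epsilon>) * (\<Sum>i<m. ?\<psi> i) + \<delta> * K"
      by (simp add: K_def algebra_simps)
    also have "\<delta> * K = e" using \<open>K > 0\<close> by (simp add: \<delta>_def)
    finally show ?case .
  qed
  then show "clarke_dd Iz (Pen f m g \<epsilon>) x s \<le>
      ereal (clarke_dd_real Iz f x s + (1/\<epsilon>) * (\<Sum>i<m. ?\<psi> i)) + ereal e"
    using clarke_dd_le_if_eventually by fastforce
qed

section \<open>Cones and separation\<close>

lemma compact_set_plus:
  fixes S T :: "'a::real_normed_vector set"
  assumes "compact S" "compact T"
  shows "compact (S + T)"
proof -
  have "S + T = {x + y | x y. x \<in> S \<and> y \<in> T}" by (auto simp: set_plus_def)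
  then show ?thesis using compact_sums[OF assms] by simp
qed

lemma compact_set_sum:
  fixes B :: "'i \<Rightarrow> 'a::real_normed_vector set"
  assumes "\<And>i. i \<in> A \<Longrightarrow> compact (B i)"
  shows "compact (\<Sum>i\<in>A. B i)"
  using assms
  by (induction A rule: infinite_finite_induct) (auto simp: compact_set_plus)

lemma mem_set_sum:
  fixes B :: "'i \<Rightarrow> 'a::comm_monoid_add set"
  assumes "finite A" "\<And>i. i \<in> A \<Longrightarrow> b i \<in> B i"
  shows "(\<Sum>i\<in>A. b i) \<in> (\<Sum>i\<in>A. B i)"
  using assms by (auto simp: set_sum_alt)

lemma dual_cone_closed_convex_cone:
  fixes C :: "'a::real_inner set"
  defines "T \<equiv> {\<eta>. \<forall>s\<in>C. 0 \<le> inner \<eta> s}"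
  shows "closed T" "convex T" "cone T" "0 \<in> T"
proof -
  have T: "T = (\<Inter>s\<in>C. {\<eta>. inner s \<eta> \<ge> 0})" by (auto simp: T_def inner_commute)
  show "closed T" unfolding T by (intro closed_INT ballI closed_halfspace_ge)
  show "convex T" unfolding T by (intro convex_INT convex_halfspace_ge)
  show "cone T" by (auto simp: cone_def T_def)
  show "0 \<in> T" by (simp add: T_def)
qed

lemma compact_convex_meets_closed_cone:
  fixes K T :: "'a::euclidean_space set"
  assumes K: "convex K" "compact K" "K \<noteq> {}" and T: "convex T" "closed T" "cone T" "0 \<in> T"
    and nonneg: "\<And>a. \<forall>\<eta>\<in>T. 0 \<le> inner a \<eta> \<Longrightarrow> \<exists>\<xi>\<in>K. 0 \<le> inner a \<xi>"
  shows "K \<inter> T \<noteq> {}"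
proof
  assume "K \<inter> T = {}"
  then obtain a b where below: "\<forall>\<xi>\<in>K. inner a \<xi> < b" and above: "\<forall>\<eta>\<in>T. b < inner a \<eta>"
    using separating_hyperplane_compact_closed[OF K T(1,2)] by blast
  have "b < 0" using above \<open>0 \<in> T\<close> by fastforce
  have "0 \<le> inner a \<eta>" if "\<eta> \<in> T" for \<eta>
  proof (rule ccontr)
    assume "\<not> 0 \<le> inner a \<eta>"
    then have "(b / inner a \<eta>) *\<^sub>R \<eta> \<in> T"
      using \<open>cone T\<close> \<open>\<eta> \<in> T\<close> \<open>b < 0\<close> unfolding cone_def by (simp add: divide_nonpos_neg less_imp_le)
    then show False using above \<open>\<not> 0 \<le> inner a \<eta>\<close> by fastforce
  qed
  then obtain \<xi> where "\<xi> \<in> K" "0 \<le> inner a \<xi>" using nonneg by blast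
  then show False using below \<open>b < 0\<close> by fastforce
qed

lemma axis_nonneg_on_Dc:
  assumes "s \<in> Dc Ic Iz l u x"
    and "j \<in> Iz \<or> (j \<in> Ic \<and> x$j = l$j \<and> c \<ge> 0) \<or> (j \<in> Ic \<and> x$j = u$j \<and> c \<le> 0)"
  shows "0 \<le> inner (axis j c) s"
  using assms by (auto simp: Dc_def inner_axis' mult_nonpos_nonpos)

text \<open>\<open>Dc\<close> is cut out by sign conditions on single coordinates, so testing against axis vectors
  suffices.\<close>
lemma mem_Dc_if_nonneg_on_dual:
  assumes "\<forall>\<eta>. (\<forall>s\<in>Dc Ic Iz l u x. 0 \<le> inner \<eta> s) \<longrightarrow> 0 \<le> inner a \<eta>"
  shows "a \<in> Dc Ic Iz l u x"
proof -
  have test: "0 \<le> a$j * c"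
    if "j \<in> Iz \<or> (j \<in> Ic \<and> x$j = l$j \<and> c \<ge> 0) \<or> (j \<in> Ic \<and> x$j = u$j \<and> c \<le> 0)" for j c
  proof -
    have "0 \<le> inner a (axis j c)" using assms axis_nonneg_on_Dc[OF _ that] by blast
    then show ?thesis by (simp add: inner_axis)
  qed
  show ?thesis
    unfolding Dc_def using test[of _ 1] test[of _ "-1"] by fastforce
qed

section \<open>Lagrange multipliers\<close>

text \<open>The Clarke subdifferential of the penalty term \<open>max 0 h / \<epsilon>\<close> at a feasible point.\<close>
definition penalty_term_subdiff :: "'n set \<Rightarrow> real \<Rightarrow> (real^'n \<Rightarrow> real) \<Rightarrow> real^'n \<Rightarrow> (real^'n) set" where
  "penalty_term_subdiff Iz \<epsilon> h x =
    (if h x = 0 then convex hull (insert 0 ((\<lambda>v. (1/\<epsilon>) *\<^sub>R v) ` clarke_sub Iz h x)) else {0})"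

lemma zero_mem_penalty_term_subdiff: "0 \<in> penalty_term_subdiff Iz \<epsilon> h x"
  by (simp add: penalty_term_subdiff_def hull_inc)

lemma convex_penalty_term_subdiff: "convex (penalty_term_subdiff Iz \<epsilon> h x)"
  by (simp add: penalty_term_subdiff_def)

lemma compact_penalty_term_subdiff:
  "lipschitz_cont Iz L h \<Longrightarrow> compact (penalty_term_subdiff Iz \<epsilon> h x)"
  by (simp add: penalty_term_subdiff_def compact_convex_hull compact_scaling compact_clarke_sub)

lemma penalty_term_subdiff_supporting:
  assumes h: "lipschitz_cont Iz L h" and a: "\<forall>i\<in>Iz. a$i = 0"
  shows "\<exists>b\<in>penalty_term_subdiff Iz \<epsilon> h x.
    inner a b = (1/\<epsilon>) * (if h x = 0 then max 0 (clarke_dd_real Iz h x a) else 0)"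
proof (cases "h x = 0 \<and> clarke_dd_real Iz h x a \<ge> 0")
  case True
  obtain v where "v \<in> clarke_sub Iz h x" "inner a v = clarke_dd_real Iz h x a"
    using clarke_sub_supporting[OF h a] by blast
  then have "(1/\<epsilon>) *\<^sub>R v \<in> penalty_term_subdiff Iz \<epsilon> h x"
    and "inner a ((1/\<epsilon>) *\<^sub>R v) = (1/\<epsilon>) * clarke_dd_real Iz h x a"
    using True by (auto simp: penalty_term_subdiff_def intro: hull_inc)
  then show ?thesis using True by (intro bexI[of _ "(1/\<epsilon>) *\<^sub>R v"]) auto
next
  case False
  then have "inner a 0 = (1/\<epsilon>) * (if h x = 0 then max 0 (clarke_dd_real Iz h x a) else 0)" by auto
  then show ?thesis using zero_mem_penalty_term_subdiff by blast
qed

lemma penalty_term_subdiff_elim: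
  assumes h: "lipschitz_cont Iz L h" and "\<epsilon> > 0" and b: "b \<in> penalty_term_subdiff Iz \<epsilon> h x"
  obtains c v where "c \<ge> 0" "v \<in> clarke_sub Iz h x" "b = c *\<^sub>R v" "h x \<noteq> 0 \<Longrightarrow> c = 0"
proof (cases "h x = 0")
  case True
  let ?S = "(\<lambda>v. (1/\<epsilon>) *\<^sub>R v) ` clarke_sub Iz h x"
  have "convex ?S" "?S \<noteq> {}"
    using convex_clarke_sub[OF h] clarke_sub_nonempty[OF h] by (auto intro: convex_scaling)
  then obtain q w where "0 \<le> q" "w \<in> clarke_sub Iz h x" "b = (q / \<epsilon>) *\<^sub>R w"
    using b True by (auto simp: penalty_term_subdiff_def convex_hull_insert hull_same)
  then show thesis using that[of "q / \<epsilon>" w] \<open>\<epsilon> > 0\<close> True by auto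
next
  case False
  then show thesis using b that[of 0] clarke_sub_nonempty[OF h] by (auto simp: penalty_term_subdiff_def)
qed

lemma clarke_stationary_support_nonneg:
  assumes f: "lipschitz_cont Iz L f" and g: "\<forall>i<m. lipschitz_cont Iz L (g i)"
    and feas: "\<forall>i<m. g i x \<le> 0" and "\<epsilon> > 0"
    and stat: "\<forall>s\<in>Dc Ic Iz l u x. clarke_dd Iz (Pen f m g \<epsilon>) x s \<ge> 0" and "a \<in> Dc Ic Iz l u x"
  shows "\<exists>\<xi>\<in>clarke_sub Iz f x + (\<Sum>i<m. penalty_term_subdiff Iz \<epsilon> (g i) x). 0 \<le> inner a \<xi>"
proof -
  have a: "\<forall>i\<in>Iz. a$i = 0" using \<open>a \<in> Dc Ic Iz l u x\<close> by (simp add: Dc_def)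
  define \<psi> where "\<psi> i = (1/\<epsilon>) * (if g i x = 0 then max 0 (clarke_dd_real Iz (g i) x a) else 0)" for i
  obtain v where v: "v \<in> clarke_sub Iz f x" "inner a v = clarke_dd_real Iz f x a"
    using clarke_sub_supporting[OF f a] by blast
  have "\<forall>i. \<exists>bi. i < m \<longrightarrow> bi \<in> penalty_term_subdiff Iz \<epsilon> (g i) x \<and> inner a bi = \<psi> i"
    using penalty_term_subdiff_supporting[OF g[rule_format] a] unfolding \<psi>_def by blast
  then obtain b where b: "\<And>i. i < m \<Longrightarrow> b i \<in> penalty_term_subdiff Iz \<epsilon> (g i) x \<and> inner a (b i) = \<psi> i"
    by metis
  have "v + (\<Sum>i<m. b i) \<in> clarke_sub Iz f x + (\<Sum>i<m. penalty_term_subdiff Iz \<epsilon> (g i) x)"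
    using v b by (intro set_plus_intro mem_set_sum) auto
  moreover have "0 \<le> clarke_dd_real Iz f x a + (\<Sum>i<m. \<psi> i)"
    using order.trans[OF stat[rule_format, OF \<open>a \<in> Dc Ic Iz l u x\<close>] clarke_dd_Pen_le[OF f g feas \<open>\<epsilon> > 0\<close> a]]
    by (simp add: \<psi>_def sum_distrib_left)
  then have "0 \<le> inner a (v + (\<Sum>i<m. b i))" using v b by (simp add: inner_add_right inner_sum_right)
  ultimately show ?thesis by blast
qed

lemma clarke_stationary_dual_point:
  assumes f: "lipschitz_cont Iz L f" and g: "\<forall>i<m. lipschitz_cont Iz L (g i)"
    and feas: "\<forall>i<m. g i x \<le> 0" and "\<epsilon> > 0"
    and stat: "\<forall>s\<in>Dc Ic Iz l u x. clarke_dd Iz (Pen f m g \<epsilon>) x s \<ge> 0"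
  shows "\<exists>\<xi>\<in>clarke_sub Iz f x + (\<Sum>i<m. penalty_term_subdiff Iz \<epsilon> (g i) x).
    \<forall>s\<in>Dc Ic Iz l u x. 0 \<le> inner \<xi> s"
proof -
  let ?K = "clarke_sub Iz f x + (\<Sum>i<m. penalty_term_subdiff Iz \<epsilon> (g i) x)"
  let ?T = "{\<eta>. \<forall>s\<in>Dc Ic Iz l u x. 0 \<le> inner \<eta> s}"
  have "convex ?K"
    by (intro convex_set_plus convex_set_sum convex_clarke_sub[OF f] convex_penalty_term_subdiff)
  moreover have "compact ?K"
    using g by (intro compact_set_plus compact_set_sum compact_clarke_sub[OF f] compact_penalty_term_subdiff) auto
  moreover have "?K \<noteq> {}"
  proof -
    obtain v where "v \<in> clarke_sub Iz f x" using clarke_sub_nonempty[OF f] by blast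
    then have "v + (\<Sum>i<m. 0) \<in> ?K"
      by (intro set_plus_intro mem_set_sum zero_mem_penalty_term_subdiff) auto
    then show ?thesis by blast
  qed
  moreover have "\<exists>\<xi>\<in>?K. 0 \<le> inner a \<xi>" if "\<forall>\<eta>\<in>?T. 0 \<le> inner a \<eta>" for a
    using that by (intro clarke_stationary_support_nonneg[OF f g feas \<open>\<epsilon> > 0\<close> stat] mem_Dc_if_nonneg_on_dual) blast
  ultimately have "?K \<inter> ?T \<noteq> {}"
    using dual_cone_closed_convex_cone[of "Dc Ic Iz l u x"] by (intro compact_convex_meets_closed_cone) auto
  then show ?thesis by blast
qed

lemma kkt_multipliers_of_penalty_subdiff:
  assumes g: "\<forall>i<m. lipschitz_cont Iz L (g i)" and "\<epsilon> > 0"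
    and \<xi>: "\<xi> \<in> clarke_sub Iz f x + (\<Sum>i<m. penalty_term_subdiff Iz \<epsilon> (g i) x)"
  obtains lam where "\<forall>i<m. lam i \<ge> 0" "(\<Sum>i<m. lam i * g i x) = 0" "\<xi> \<in> kkt_set Iz f m g lam x"
proof -
  obtain v c where v: "v \<in> clarke_sub Iz f x" and c: "c \<in> (\<Sum>i<m. penalty_term_subdiff Iz \<epsilon> (g i) x)"
    and "\<xi> = v + c"
    using \<xi> by (rule set_plus_elim)
  then obtain b where b: "\<forall>i\<in>{..<m}. b i \<in> penalty_term_subdiff Iz \<epsilon> (g i) x"
    and \<xi>_eq: "\<xi> = v + (\<Sum>i<m. b i)"
    unfolding set_sum_alt[OF finite_lessThan] by blast
  have "\<exists>c w. c \<ge> 0 \<and> w \<in> clarke_sub Iz (g i) x \<and> b i = c *\<^sub>R w \<and> (g i x \<noteq> 0 \<longrightarrow> c = 0)"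
    if "i < m" for i
  proof -
    have "b i \<in> penalty_term_subdiff Iz \<epsilon> (g i) x" using that b by simp
    then show ?thesis by (rule penalty_term_subdiff_elim[OF g[rule_format, OF that] \<open>\<epsilon> > 0\<close>]) blast
  qed
  then obtain lam w where lam: "\<And>i. i < m \<Longrightarrow> lam i \<ge> 0 \<and> w i \<in> clarke_sub Iz (g i) x \<and>
      b i = lam i *\<^sub>R w i \<and> (g i x \<noteq> 0 \<longrightarrow> lam i = 0)"
    by metis
  show thesis
  proof (rule that[of lam])
    show "\<forall>i<m. lam i \<ge> 0" using lam by blast
    show "(\<Sum>i<m. lam i * g i x) = 0" using lam by (intro sum.neutral) auto
    show "\<xi> \<in> kkt_set Iz f m g lam x"
      unfolding kkt_set_def using v lam \<xi>_eq by (intro CollectI exI[of _ v] exI[of _ b]) auto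
  qed
qed

lemma Pen_feasible_eq:
  assumes "y \<in> feasF m g"
  shows "Pen f m g \<epsilon> y = f y"
proof -
  have "penalty m g y = 0" using assms unfolding penalty_def feasF_def by (intro sum.neutral) auto
  then show ?thesis by (simp add: Pen_def)
qed

theorem mainTheorem9:
  fixes Ic Iz :: "'n::finite set" and l u :: "real^'n" and f :: "real^'n \<Rightarrow> real"
    and m :: nat and g :: "nat \<Rightarrow> real^'n \<Rightarrow> real" and L \<epsilon> :: real and xbar :: "real^'n"
  assumes "Ic \<union> Iz = UNIV" and "Ic \<inter> Iz = {}"
    and "\<forall>i. l$i < u$i"
    and "\<forall>i\<in>Iz. l$i \<in> \<int> \<and> u$i \<in> \<int>"
    and "lipschitz_cont Iz L f" and "\<forall>i<m. lipschitz_cont Iz L (g i)"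
    and "EMFCQ Ic Iz l u m g"
    and "\<epsilon> > 0"
    and "clarke_stationary_pen Ic Iz l u f m g \<epsilon> xbar"
    and "xbar \<in> feasF m g \<inter> intZ Iz \<inter> boxX l u"
  shows "kkt_stationary Ic Iz l u f m g xbar"
proof -
  note f = assms(5) and g = assms(6) and \<epsilon> = assms(8) and xbar = assms(10)
  have feas: "\<forall>i<m. g i xbar \<le> 0" using xbar by (simp add: feasF_def)
  have stat_c: "\<forall>s\<in>Dc Ic Iz l u xbar. clarke_dd Iz (Pen f m g \<epsilon>) xbar s \<ge> 0"
    and stat_z: "\<forall>y\<in>Bz Ic Iz l u xbar. Pen f m g \<epsilon> xbar \<le> Pen f m g \<epsilon> y"
    using assms(9) unfolding clarke_stationary_pen_def by blast+
  obtain \<xi> where \<xi>: "\<xi> \<in> clarke_sub Iz f xbar + (\<Sum>i<m. penalty_term_subdiff Iz \<epsilon> (g i) xbar)"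
    and \<xi>_dual: "\<forall>s\<in>Dc Ic Iz l u xbar. 0 \<le> inner \<xi> s"
    using clarke_stationary_dual_point[OF f g feas \<epsilon> stat_c] by blast
  obtain lam where "\<forall>i<m. lam i \<ge> 0" "(\<Sum>i<m. lam i * g i xbar) = 0"
    and "\<xi> \<in> kkt_set Iz f m g lam xbar"
    using kkt_multipliers_of_penalty_subdiff[OF g \<epsilon> \<xi>] by blast
  moreover have "Sup ((\<lambda>\<xi>. ereal (\<xi> \<bullet> s)) ` kkt_set Iz f m g lam xbar) \<ge> 0"
    if "s \<in> Dc Ic Iz l u xbar" for s
    using \<xi>_dual that \<open>\<xi> \<in> kkt_set Iz f m g lam xbar\<close> by (intro Sup_upper2[of "ereal (\<xi> \<bullet> s)"]) auto
  moreover have "f xbar \<le> f y" if "y \<in> Bz Ic Iz l u xbar \<inter> feasF m g" for y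
    using stat_z that xbar by (auto simp: Pen_feasible_eq)
  ultimately show ?thesis unfolding kkt_stationary_def using xbar by blast
qed

end
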